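(* Let $A$ be a C*-algebra, let $\{p_i\}_{i\in I}$ be a family of mutually orthogonal projections in the multiplier algebra $M(A)$, and let $B$ be a *-subalgebra of $A$ such that $B\subseteq\bigoplus_{i,j\in I}B\cap(p_iAp_j)$ (i.e. every $b\in B$ is a finite sum of elements of the sets $B\cap(p_iAp_j)$) and such that $B\cap(p_iAp_i)$ is a core subalgebra of $A$ for every $i\in I$. Then $B$ is a core subalgebra of $A$.
   Context: A representation of a *-algebra $B$ is a multiplicative, *-preserving, linear map $\pi:B\to\mathcal B(H)$ for some Hilbert space $H$ (no continuity assumed). A *-subalgebra $B$ of a C*-algebra $A$ is a core subalgebra of $A$ if every representation of $B$ is continuous with respect to the norm induced from $A$. *)

theory Defs
  imports Complex_Main
begin

class complex_vector = real_vector +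
  fixes scaleC :: "complex \<Rightarrow> 'a \<Rightarrow> 'a"  (infixr \<open>*\<^sub>C\<close> 75)
  assumes scaleC_add_right: "scaleC c (x + y) = scaleC c x + scaleC c y"
    and scaleC_add_left: "scaleC (c + d) x = scaleC c x + scaleC d x"
    and scaleC_scaleC: "scaleC c (scaleC d x) = scaleC (c * d) x"
    and scaleC_one: "scaleC 1 x = x"
    and scaleR_scaleC: "scaleR r x = scaleC (complex_of_real r) x"

class complex_normed_vector = complex_vector + real_normed_vector +
  assumes norm_scaleC: "norm (scaleC c x) = cmod c * norm x"

class complex_normed_algebra = complex_normed_vector + real_normed_algebra +
  assumes scaleC_mult_left: "scaleC c x * y = scaleC c (x * y)"
    and scaleC_mult_right: "x * scaleC c y = scaleC c (x * y)"

text \<open>A (not necessarily unital) C*-algebra: a complete complex normed algebra with an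
  isometric-in-the-C*-sense involution.  The algebra A of the paper is the whole type.\<close>
class cstar_algebra = complex_normed_algebra + banach +
  fixes cstar :: "'a \<Rightarrow> 'a"
  assumes cstar_cstar: "cstar (cstar x) = x"
    and cstar_add: "cstar (x + y) = cstar x + cstar y"
    and cstar_scaleC: "cstar (scaleC c x) = scaleC (cnj c) (cstar x)"
    and cstar_mult: "cstar (x * y) = cstar y * cstar x"
    and cstar_identity: "norm (cstar x * x) = norm x * norm x"

class complex_inner = complex_normed_vector +
  fixes cinner :: "'a \<Rightarrow> 'a \<Rightarrow> complex"
  assumes cinner_commute: "cinner x y = cnj (cinner y x)"
    and cinner_add_left: "cinner (x + y) z = cinner x z + cinner y z"
    and cinner_scaleC_left: "cinner (scaleC c x) y = cnj c * cinner x y"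
    and cinner_ge_zero: "0 \<le> Re (cinner x x)"
    and cinner_eq_zero_iff: "cinner x x = 0 \<longleftrightarrow> x = 0"
    and norm_eq_sqrt_cinner: "norm x = sqrt (Re (cinner x x))"

class chilbert_space = complex_inner + complete_space

definition star_subalgebra :: "'a::cstar_algebra set \<Rightarrow> bool" where
  "star_subalgebra B \<longleftrightarrow> 0 \<in> B
     \<and> (\<forall>x\<in>B. \<forall>y\<in>B. x + y \<in> B)
     \<and> (\<forall>c. \<forall>x\<in>B. scaleC c x \<in> B)
     \<and> (\<forall>x\<in>B. \<forall>y\<in>B. x * y \<in> B)
     \<and> (\<forall>x\<in>B. cstar x \<in> B)"

definition bounded_operator :: "('h::chilbert_space \<Rightarrow> 'h) \<Rightarrow> bool" where
  "bounded_operator T \<longleftrightarrow> (\<forall>x y. T (x + y) = T x + T y)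
     \<and> (\<forall>c x. T (scaleC c x) = scaleC c (T x))
     \<and> (\<exists>K. \<forall>x. norm (T x) \<le> K * norm x)"

text \<open>A representation of the *-algebra B on the Hilbert space 'h: a multiplicative,
  *-preserving, complex-linear map from B into B('h).  No continuity is assumed.\<close>
definition representation :: "'a::cstar_algebra set \<Rightarrow> ('a \<Rightarrow> ('h::chilbert_space \<Rightarrow> 'h)) \<Rightarrow> bool" where
  "representation B \<pi> \<longleftrightarrow>
     (\<forall>b\<in>B. bounded_operator (\<pi> b))
     \<and> (\<forall>b1\<in>B. \<forall>b2\<in>B. \<pi> (b1 + b2) = (\<lambda>x. \<pi> b1 x + \<pi> b2 x))
     \<and> (\<forall>c. \<forall>b\<in>B. \<pi> (scaleC c b) = (\<lambda>x. scaleC c (\<pi> b x)))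
     \<and> (\<forall>b1\<in>B. \<forall>b2\<in>B. \<pi> (b1 * b2) = \<pi> b1 \<circ> \<pi> b2)
     \<and> (\<forall>b\<in>B. \<forall>x y. cinner (\<pi> b x) y = cinner x (\<pi> (cstar b) y))"

text \<open>Continuity of \<pi> on B, B carrying the norm of A and B('h) the operator norm
  (\<open>\<forall>x. norm (\<pi> b x - \<pi> b0 x) \<le> e * norm x\<close> says the operator norm of
  \<open>\<pi> b - \<pi> b0\<close> is at most e).\<close>
definition rep_continuous :: "'a::cstar_algebra set \<Rightarrow> ('a \<Rightarrow> ('h::chilbert_space \<Rightarrow> 'h)) \<Rightarrow> bool" where
  "rep_continuous B \<pi> \<longleftrightarrow>
     (\<forall>b0\<in>B. \<forall>e>0. \<exists>d>0. \<forall>b\<in>B. norm (b - b0) < d \<longrightarrow>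
        (\<forall>x. norm (\<pi> b x - \<pi> b0 x) \<le> e * norm x))"

text \<open>Core subalgebra, relative to representations on Hilbert spaces of type 'h.\<close>
definition core_subalgebra :: "'h::chilbert_space itself \<Rightarrow> 'a::cstar_algebra set \<Rightarrow> bool" where
  "core_subalgebra (_ :: 'h itself) B \<longleftrightarrow> star_subalgebra B \<and>
     (\<forall>\<pi> :: 'a \<Rightarrow> ('h \<Rightarrow> 'h). representation B \<pi> \<longrightarrow> rep_continuous B \<pi>)"

section \<open>Multiplier algebra M(A) as double centralizers\<close>

type_synonym 'a multiplier = "('a \<Rightarrow> 'a) \<times> ('a \<Rightarrow> 'a)"

definition double_centralizer :: "'a::cstar_algebra multiplier \<Rightarrow> bool" where
  "double_centralizer m \<longleftrightarrow> (\<forall>a b. a * fst m b = snd m a * b)"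

definition mult_mult :: "'a::cstar_algebra multiplier \<Rightarrow> 'a multiplier \<Rightarrow> 'a multiplier" where
  "mult_mult m n = (fst m \<circ> fst n, snd n \<circ> snd m)"

definition mult_star :: "'a::cstar_algebra multiplier \<Rightarrow> 'a multiplier" where
  "mult_star m = ((\<lambda>a. cstar (snd m (cstar a))), (\<lambda>a. cstar (fst m (cstar a))))"

definition mult_zero :: "'a::cstar_algebra multiplier" where
  "mult_zero = ((\<lambda>_. 0), (\<lambda>_. 0))"

definition mult_projection :: "'a::cstar_algebra multiplier \<Rightarrow> bool" where
  "mult_projection p \<longleftrightarrow> double_centralizer p \<and> mult_mult p p = p \<and> mult_star p = p"

text \<open>The set p A q = {p a q | a \<in> A} for multipliers p, q.\<close>
definition corner :: "'a::cstar_algebra multiplier \<Rightarrow> 'a multiplier \<Rightarrow> 'a set" where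
  "corner p q = {fst p (snd q a) | a. True}"

end

theory Submission imports Defs begin

(* Let \<pi> be a representation of B.  Since every diagonal corner
   B \<inter> p_l A p_l is a core subalgebra, \<pi> is bounded there by some constant K_l;
   via the C*-identity ||\<pi>(c)||^2 = ||\<pi>(c* c)|| this gives the bound sqrt K_l on every
   off-diagonal piece B \<inter> p_k A p_l, because c* c lies in the diagonal corner of l.
   An element b of B is a finite sum of such pieces, and the pieces are recovered as
   p_k b p_l, so they have norm at most ||b||.  Hence \<pi> is bounded, with a constant
   depending only on the finite index set S carrying b, on the *-closed multiplicative
   set of elements of B supported in S.  The power trick (iterating c \<mapsto> c c on b* b)
   improves any such bound to the constant 1; so \<pi> is contractive on B and therefore
   continuous. *)

section \<open>Elementary facts about C*-algebras\<close>

lemma cstar_zero: "cstar (0::'a::cstar_algebra) = 0"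
  using cstar_add[of "0::'a" 0] by simp

lemma zero_left_cancel:
  fixes d :: "'a::cstar_algebra"
  assumes "\<And>x. x * d = 0" shows "d = 0"
proof -
  have "norm (cstar d * d) = 0" using assms by simp
  then have "norm d * norm d = 0" by (simp add: cstar_identity)
  then show ?thesis by simp
qed

lemma zero_right_cancel:
  fixes d :: "'a::cstar_algebra"
  assumes "\<And>x. d * x = 0" shows "d = 0"
proof -
  have "x * cstar d = 0" for x
  proof -
    have "cstar (d * cstar x) = x * cstar d" by (simp add: cstar_mult cstar_cstar)
    then show ?thesis using assms[of "cstar x"] by (simp add: cstar_zero)
  qed
  then have "cstar d = 0" by (rule zero_left_cancel)
  then show ?thesis by (metis cstar_cstar cstar_zero)
qed

lemma norm_le_cstar: "norm (x::'a::cstar_algebra) \<le> norm (cstar x)"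
proof (cases "norm x = 0")
  case False
  have "norm x * norm x = norm (cstar x * x)" by (simp add: cstar_identity)
  also have "\<dots> \<le> norm (cstar x) * norm x" by (rule norm_mult_ineq)
  finally show ?thesis using False by (simp add: mult_le_cancel_right)
qed simp

lemma norm_cstar: "norm (cstar (x::'a::cstar_algebra)) = norm x"
  using norm_le_cstar[of x] norm_le_cstar[of "cstar x"] by (simp add: cstar_cstar)

text \<open>The iterated squares \<open>(b* b)^(2^n)\<close> of the power trick, written without a unit.\<close>
definition iterated_square :: "nat \<Rightarrow> 'a::cstar_algebra \<Rightarrow> 'a" where
  "iterated_square n b = ((\<lambda>z. z * z) ^^ n) (cstar b * b)"

lemma iterated_square_0: "iterated_square 0 b = cstar b * b"
  by (simp add: iterated_square_def)

lemma iterated_square_Suc: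
  "iterated_square (Suc n) b = iterated_square n b * iterated_square n b"
  by (simp add: iterated_square_def)

lemma iterated_square_selfadjoint: "cstar (iterated_square n b) = iterated_square n b"
  by (induction n) (simp_all add: iterated_square_0 iterated_square_Suc cstar_mult cstar_cstar)

lemma iterated_square_norm: "norm (iterated_square n b) \<le> norm b ^ 2 ^ (n + 1)"
proof (induction n)
  case 0
  show ?case by (simp add: iterated_square_0 cstar_identity power2_eq_square)
next
  case (Suc n)
  have "norm (iterated_square (Suc n) b) \<le> norm (iterated_square n b) * norm (iterated_square n b)"
    unfolding iterated_square_Suc by (rule norm_mult_ineq)
  also have "\<dots> \<le> norm b ^ 2 ^ (n + 1) * norm b ^ 2 ^ (n + 1)"
    using Suc.IH by (intro mult_mono) auto
  also have "\<dots> = norm b ^ 2 ^ (Suc n + 1)" by (simp flip: power_add)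
  finally show ?case .
qed

lemma iterated_square_closed:
  assumes "\<forall>y\<in>D. cstar y \<in> D" "\<forall>y\<in>D. \<forall>z\<in>D. y * z \<in> D" "b \<in> D"
  shows "iterated_square n b \<in> D"
  using assms by (induction n) (simp_all add: iterated_square_0 iterated_square_Suc)

section \<open>Double centralizers and projections in the multiplier algebra\<close>

context
  fixes m :: "'a::cstar_algebra multiplier"
  assumes dc: "double_centralizer m"
begin

lemma dc_eq: "a * fst m b = snd m a * b"
  using dc by (simp add: double_centralizer_def)

lemma L_mult: "fst m (a * b) = fst m a * b"
proof -
  have "x * (fst m (a * b) - fst m a * b) = 0" for x
    by (simp add: right_diff_distrib dc_eq mult.assoc[symmetric])
  then show ?thesis using zero_left_cancel by fastforce
qed

lemma R_mult: "snd m (a * b) = a * snd m b"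
proof -
  have "(snd m (a * b) - a * snd m b) * x = 0" for x
    by (simp add: left_diff_distrib dc_eq[symmetric] mult.assoc)
  then show ?thesis using zero_right_cancel by fastforce
qed

lemma L_add: "fst m (a + b) = fst m a + fst m b"
proof -
  have "x * (fst m (a + b) - fst m a - fst m b) = 0" for x
    by (simp add: right_diff_distrib dc_eq distrib_left)
  then have "fst m (a + b) - fst m a - fst m b = 0" by (rule zero_left_cancel)
  then show ?thesis by (simp add: algebra_simps)
qed

lemma R_add: "snd m (a + b) = snd m a + snd m b"
proof -
  have "(snd m (a + b) - snd m a - snd m b) * x = 0" for x
    by (simp add: left_diff_distrib dc_eq[symmetric] distrib_right)
  then have "snd m (a + b) - snd m a - snd m b = 0" by (rule zero_right_cancel)
  then show ?thesis by (simp add: algebra_simps)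
qed

lemma L_zero: "fst m 0 = 0" using L_add[of 0 0] by simp
lemma R_zero: "snd m 0 = 0" using R_add[of 0 0] by simp

lemma L_sum: "fst m (sum f F) = (\<Sum>i\<in>F. fst m (f i))"
  by (induction F rule: infinite_finite_induct) (auto simp: L_zero L_add)

lemma R_sum: "snd m (sum f F) = (\<Sum>i\<in>F. snd m (f i))"
  by (induction F rule: infinite_finite_induct) (auto simp: R_zero R_add)

end

lemma LR_comm:
  assumes "double_centralizer m" "double_centralizer n"
  shows "fst m (snd n z) = snd n (fst m z)"
proof -
  have "x * (snd n (fst m z) - fst m (snd n z)) = 0" for x
  proof -
    have "x * snd n (fst m z) = snd n (x * fst m z)" using R_mult[OF assms(2)] by simp
    also have "\<dots> = snd n (snd m x * z)" using dc_eq[OF assms(1)] by simp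
    also have "\<dots> = snd m x * snd n z" using R_mult[OF assms(2)] by simp
    also have "\<dots> = x * fst m (snd n z)" using dc_eq[OF assms(1)] by simp
    finally show ?thesis by (simp add: right_diff_distrib)
  qed
  then show ?thesis using zero_left_cancel by fastforce
qed

context
  fixes p :: "'a::cstar_algebra multiplier"
  assumes pr: "mult_projection p"
begin

lemma projection_dc: "double_centralizer p"
  using pr by (simp add: mult_projection_def)

lemma LL: "fst p (fst p a) = fst p a"
proof -
  have "fst p \<circ> fst p = fst p" using pr
    by (metis fst_conv mult_mult_def mult_projection_def)
  then show ?thesis by (metis comp_apply)
qed

lemma RR: "snd p (snd p a) = snd p a"
proof -
  have "snd p \<circ> snd p = snd p" using pr
    by (metis snd_conv mult_mult_def mult_projection_def)
  then show ?thesis by (metis comp_apply)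
qed

lemma L_star: "fst p a = cstar (snd p (cstar a))"
proof -
  have "(\<lambda>a. cstar (snd p (cstar a))) = fst p" using pr
    by (metis fst_conv mult_star_def mult_projection_def)
  then show ?thesis by metis
qed

lemma R_star: "snd p a = cstar (fst p (cstar a))"
  by (simp add: L_star cstar_cstar)

lemma norm_L: "norm (fst p a) \<le> norm a"
proof (cases "norm (fst p a) = 0")
  case False
  have "cstar (fst p a) = snd p (cstar a)" by (simp add: L_star cstar_cstar)
  then have "cstar (fst p a) * fst p a = cstar a * fst p a"
    using dc_eq[OF projection_dc, of "cstar a" "fst p a"] LL by simp
  then have "norm (fst p a) * norm (fst p a) = norm (cstar a * fst p a)"
    by (metis cstar_identity)
  also have "\<dots> \<le> norm a * norm (fst p a)" using norm_mult_ineq norm_cstar by metis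
  finally show ?thesis using False by (simp add: mult_le_cancel_right)
qed simp

lemma norm_R: "norm (snd p a) \<le> norm a"
  using norm_L[of "cstar a"] by (simp add: R_star norm_cstar)

end

section \<open>Corners of an orthogonal family of projections\<close>

locale orthogonal_projections =
  fixes I :: "'i set" and p :: "'i \<Rightarrow> 'a::cstar_algebra multiplier"
  assumes proj: "\<forall>i\<in>I. mult_projection (p i)"
    and orth: "\<forall>i\<in>I. \<forall>j\<in>I. i \<noteq> j \<longrightarrow> mult_mult (p i) (p j) = mult_zero"
begin

abbreviation L :: "'i \<Rightarrow> 'a \<Rightarrow> 'a" where "L i \<equiv> fst (p i)"
abbreviation R :: "'i \<Rightarrow> 'a \<Rightarrow> 'a" where "R i \<equiv> snd (p i)"

lemma member_dc: "i \<in> I \<Longrightarrow> double_centralizer (p i)"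
  using proj projection_dc by blast

lemma L_orth: "k \<in> I \<Longrightarrow> i \<in> I \<Longrightarrow> k \<noteq> i \<Longrightarrow> L k (L i u) = 0"
  using orth by (metis comp_apply fst_conv mult_mult_def mult_zero_def)

lemma R_orth: "l \<in> I \<Longrightarrow> j \<in> I \<Longrightarrow> l \<noteq> j \<Longrightarrow> R l (R j u) = 0"
  using orth by (metis comp_apply snd_conv mult_mult_def mult_zero_def)

lemma corner_fix:
  assumes "k \<in> I" "l \<in> I" "c \<in> corner (p k) (p l)"
  shows "L k c = c" "R l c = c"
proof -
  obtain a where c: "c = L k (R l a)" using assms(3) by (auto simp: corner_def)
  show "L k c = c" "R l c = c"
    using c LL RR LR_comm[OF member_dc member_dc] proj assms(1,2) by metis+
qed

lemma corner_component:
  assumes "i \<in> I" "j \<in> I" "k \<in> I" "l \<in> I" "z \<in> corner (p i) (p j)"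
  shows "L k (R l z) = (if k = i \<and> l = j then z else 0)"
proof -
  have z: "L i z = z" "R j z = z" using corner_fix[OF assms(1,2,5)] by auto
  have lr: "L k (R l z) = L k (L i (R l (R j z)))"
    using z LR_comm[OF member_dc[OF assms(1)] member_dc[OF assms(4)]] by metis
  show ?thesis
  proof (cases "k = i \<and> l = j")
    case True
    then show ?thesis using lr z by simp
  next
    case False
    then consider "k \<noteq> i" | "l \<noteq> j" by blast
    then show ?thesis
    proof cases
      case 1
      then show ?thesis using lr L_orth assms by simp
    next
      case 2
      then show ?thesis using lr R_orth L_zero[OF member_dc] assms by simp
    qed
  qed
qed

lemma corner_cstar_mult:
  assumes "k \<in> I" "l \<in> I" "c \<in> corner (p k) (p l)"
  shows "cstar c * c \<in> corner (p l) (p l)"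
proof -
  have "L l (cstar c * c) = cstar c * c"
    using L_mult[OF member_dc] L_star proj corner_fix[OF assms] assms(2) by (metis cstar_cstar)
  moreover have "R l (cstar c * c) = cstar c * c"
    using R_mult[OF member_dc] corner_fix[OF assms] assms(2) by metis
  ultimately show ?thesis unfolding corner_def by (metis (mono_tags, lifting) mem_Collect_eq)
qed

lemma sum_component:
  assumes G: "finite G" "G \<subseteq> I \<times> I"
    and d: "\<forall>(i, j)\<in>G. d (i, j) \<in> corner (p i) (p j)"
    and kl: "(k, l) \<in> G"
  shows "L k (R l (\<Sum>ij\<in>G. d ij)) = d (k, l)"
proof -
  have klI: "k \<in> I" "l \<in> I" using kl G by auto
  have "L k (R l (\<Sum>ij\<in>G. d ij)) = (\<Sum>ij\<in>G. L k (R l (d ij)))"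
    unfolding R_sum[OF member_dc[OF klI(2)]] L_sum[OF member_dc[OF klI(1)]] ..
  also have "\<dots> = (\<Sum>ij\<in>G. if ij = (k, l) then d ij else 0)"
  proof (rule sum.cong[OF refl])
    fix ij assume ijG: "ij \<in> G"
    obtain i j where ij: "ij = (i, j)" by (cases ij)
    have ijI: "i \<in> I" "j \<in> I" using ijG ij G by auto
    have "d (i, j) \<in> corner (p i) (p j)" using d ijG ij by auto
    then show "L k (R l (d ij)) = (if ij = (k, l) then d ij else 0)"
      using corner_component[OF ijI klI] ij by auto
  qed
  also have "\<dots> = d (k, l)" using G kl by simp
  finally show ?thesis .
qed

definition supported :: "'i set \<Rightarrow> 'a \<Rightarrow> bool" where
  "supported S y \<longleftrightarrow> (\<forall>k\<in>I - S. L k y = 0 \<and> R k y = 0)"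

lemma supported_mult: "supported S y \<Longrightarrow> supported S z \<Longrightarrow> supported S (y * z)"
  using L_mult[OF member_dc] R_mult[OF member_dc] by (simp add: supported_def)

lemma supported_cstar:
  assumes "supported S y" shows "supported S (cstar y)"
  unfolding supported_def
proof
  fix k assume k: "k \<in> I - S"
  then have pk: "mult_projection (p k)" using proj by blast
  then show "L k (cstar y) = 0 \<and> R k (cstar y) = 0"
    using assms k L_star[OF pk, of "cstar y"] R_star[OF pk, of "cstar y"]
    by (simp add: supported_def cstar_zero cstar_cstar)
qed

lemma sum_supported:
  assumes G: "finite G" "G \<subseteq> I \<times> I"
    and d: "\<forall>(i, j)\<in>G. d (i, j) \<in> corner (p i) (p j)"
  shows "supported (fst ` G \<union> snd ` G) (\<Sum>ij\<in>G. d ij)"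
  unfolding supported_def
proof (intro ballI conjI)
  fix k assume k: "k \<in> I - (fst ` G \<union> snd ` G)"
  have kI: "k \<in> I" using k by blast
  have vanish: "L k (d ij) = 0 \<and> R k (d ij) = 0" if "ij \<in> G" for ij
  proof -
    obtain i j where ij: "ij = (i, j)" by (cases ij)
    with that have ijG: "(i, j) \<in> G" by simp
    then have ijI: "i \<in> I" "j \<in> I" and "k \<noteq> i" "k \<noteq> j" using G k by force+
    moreover have "d ij \<in> corner (p i) (p j)" using d ijG ij by auto
    then have "L i (d ij) = d ij" "R j (d ij) = d ij" using corner_fix[OF ijI] by auto
    ultimately show ?thesis using L_orth[of k i "d ij"] R_orth[of k j "d ij"] k by auto
  qed
  then show "L k (\<Sum>ij\<in>G. d ij) = 0" "R k (\<Sum>ij\<in>G. d ij) = 0"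
    unfolding L_sum[OF member_dc[OF kI]] R_sum[OF member_dc[OF kI]] by (simp_all add: vanish)
qed

lemma supported_sum_restrict:
  assumes G: "finite G" "G \<subseteq> I \<times> I"
    and d: "\<forall>(i, j)\<in>G. d (i, j) \<in> corner (p i) (p j)"
    and supp: "supported S (\<Sum>ij\<in>G. d ij)"
  shows "(\<Sum>ij\<in>G. d ij) = (\<Sum>ij\<in>G \<inter> S \<times> S. d ij)"
proof (rule sum.mono_neutral_right[OF G(1)])
  show "\<forall>ij\<in>G - G \<inter> S \<times> S. d ij = 0"
  proof
    fix ij assume ij: "ij \<in> G - G \<inter> S \<times> S"
    obtain k l where kl: "ij = (k, l)" by (cases ij) auto
    have klI: "k \<in> I" "l \<in> I" using ij kl G by auto
    have "k \<notin> S \<or> l \<notin> S" using ij kl by auto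
    then have "L k (R l (\<Sum>ij\<in>G. d ij)) = 0"
    proof
      assume "k \<notin> S"
      then have "L k (\<Sum>ij\<in>G. d ij) = 0" using supp klI by (simp add: supported_def)
      then show ?thesis
        using LR_comm[OF member_dc[OF klI(1)] member_dc[OF klI(2)]] R_zero[OF member_dc[OF klI(2)]]
        by simp
    next
      assume "l \<notin> S"
      then have "R l (\<Sum>ij\<in>G. d ij) = 0" using supp klI by (simp add: supported_def)
      then show ?thesis using L_zero[OF member_dc[OF klI(1)]] by simp
    qed
    then show "d ij = 0" using sum_component[OF G d] ij kl by simp
  qed
qed auto

end

section \<open>The Cauchy-Schwarz inequality\<close>

lemma cinner_zero_left: "cinner 0 (y::'h::complex_inner) = 0"
  using cinner_add_left[of 0 0 y] by simp

lemma cinner_zero_right: "cinner (x::'h::complex_inner) 0 = 0"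
  using cinner_commute[of x 0] cinner_zero_left[of x] by simp

lemma cinner_add_right: "cinner (x::'h::complex_inner) (y + z) = cinner x y + cinner x z"
  by (metis cinner_commute cinner_add_left complex_cnj_add)

lemma cinner_scaleC_right: "cinner (x::'h::complex_inner) (scaleC c y) = c * cinner x y"
  by (metis cinner_commute cinner_scaleC_left complex_cnj_cnj complex_cnj_mult)

lemma cinner_self: "Re (cinner x x) = (norm (x::'h::complex_inner))\<^sup>2"
  using norm_eq_sqrt_cinner[of x] cinner_ge_zero[of x] by simp

text \<open>Expand \<open>0 \<le> <x - t y, x - t y>\<close> with t = ||x|| / ||y||.\<close>
lemma Re_cinner_le:
  fixes x y :: "'h::complex_inner"
  shows "Re (cinner x y) \<le> norm x * norm y"
proof (cases "x = 0 \<or> y = 0")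
  case True then show ?thesis by (auto simp: cinner_zero_left cinner_zero_right)
next
  case False
  then have nx: "norm x > 0" and ny: "norm y > 0" by auto
  define t where "t = norm x / norm y"
  define c where "c = complex_of_real (- t)"
  have "0 \<le> Re (cinner (x + scaleC c y) (x + scaleC c y))" by (rule cinner_ge_zero)
  also have "\<dots> = Re (cinner x x) + Re (c * cinner x y) + Re (cnj c * cinner y x)
      + Re (cnj c * (c * cinner y y))"
    by (simp add: cinner_add_left cinner_add_right cinner_scaleC_left cinner_scaleC_right algebra_simps)
  also have "Re (cnj c * cinner y x) = Re (c * cinner x y)"
    using cinner_commute[of y x] by (simp add: c_def)
  also have "Re (c * cinner x y) = - t * Re (cinner x y)" by (simp add: c_def)
  also have "Re (cnj c * (c * cinner y y)) = t^2 * Re (cinner y y)"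
    by (simp add: c_def power2_eq_square)
  finally have "0 \<le> (norm x)\<^sup>2 - 2 * t * Re (cinner x y) + t^2 * (norm y)\<^sup>2"
    by (simp add: cinner_self)
  also have "t^2 * (norm y)\<^sup>2 = (norm x)\<^sup>2" using ny by (simp add: t_def power_divide)
  finally have "t * Re (cinner x y) \<le> (norm x)\<^sup>2" by simp
  then have "norm x * Re (cinner x y) \<le> (norm x)\<^sup>2 * norm y"
    using ny by (simp add: t_def field_simps)
  then show ?thesis using nx by (simp add: power2_eq_square mult_le_cancel_left)
qed

section \<open>Bounds for representations of *-subalgebras\<close>

lemma representation_mono: "B' \<subseteq> B \<Longrightarrow> representation B \<pi> \<Longrightarrow> representation B' \<pi>"
  unfolding representation_def by blast

context
  fixes B :: "'a::cstar_algebra set" and \<pi> :: "'a \<Rightarrow> 'h::chilbert_space \<Rightarrow> 'h"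
  assumes sub: "star_subalgebra B" and rep: "representation B \<pi>"
begin

lemma pi_add: "b1 \<in> B \<Longrightarrow> b2 \<in> B \<Longrightarrow> \<pi> (b1 + b2) x = \<pi> b1 x + \<pi> b2 x"
  using rep by (simp add: representation_def)

lemma pi_mult: "b1 \<in> B \<Longrightarrow> b2 \<in> B \<Longrightarrow> \<pi> (b1 * b2) x = \<pi> b1 (\<pi> b2 x)"
  using rep by (simp add: representation_def)

lemma pi_scaleC: "b \<in> B \<Longrightarrow> \<pi> (scaleC c b) x = scaleC c (\<pi> b x)"
  using rep by (simp add: representation_def)

lemma pi_adj: "b \<in> B \<Longrightarrow> cinner (\<pi> b x) y = cinner x (\<pi> (cstar b) y)"
  using rep by (simp add: representation_def)

lemma B_zero: "0 \<in> B" using sub by (simp add: star_subalgebra_def)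
lemma B_add: "x \<in> B \<Longrightarrow> y \<in> B \<Longrightarrow> x + y \<in> B" using sub by (simp add: star_subalgebra_def)
lemma B_mult: "x \<in> B \<Longrightarrow> y \<in> B \<Longrightarrow> x * y \<in> B" using sub by (simp add: star_subalgebra_def)
lemma B_scaleC: "x \<in> B \<Longrightarrow> scaleC c x \<in> B" using sub by (simp add: star_subalgebra_def)
lemma B_cstar: "x \<in> B \<Longrightarrow> cstar x \<in> B" using sub by (simp add: star_subalgebra_def)

lemma B_diff: "x \<in> B \<Longrightarrow> y \<in> B \<Longrightarrow> x - y \<in> B"
proof -
  assume "x \<in> B" "y \<in> B"
  moreover have "scaleC (-1) y = - y"
    by (metis scaleR_scaleC scaleR_minus1_left of_real_minus of_real_1)
  ultimately show ?thesis using B_add B_scaleC by (metis diff_conv_add_uminus)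
qed

lemma pi_zero: "\<pi> 0 x = 0"
  using pi_add[OF B_zero B_zero, of x] by simp

lemma pi_diff: "b \<in> B \<Longrightarrow> b0 \<in> B \<Longrightarrow> \<pi> (b - b0) x = \<pi> b x - \<pi> b0 x"
  using pi_add[of b0 "b - b0" x] B_diff by simp

lemma B_sum: "(\<And>i. i \<in> F \<Longrightarrow> f i \<in> B) \<Longrightarrow> sum f F \<in> B"
  by (induction F rule: infinite_finite_induct) (auto simp: B_zero B_add)

lemma pi_sum: "(\<And>i. i \<in> F \<Longrightarrow> f i \<in> B) \<Longrightarrow> \<pi> (sum f F) x = (\<Sum>i\<in>F. \<pi> (f i) x)"
proof (induction F rule: infinite_finite_induct)
  case (insert i F)
  then show ?case using pi_add[of "f i" "sum f F" x] B_sum[of F f] by auto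
qed (auto simp: pi_zero)

text \<open>The C*-identity for operators: a bound M for \<pi>(c* c) yields the bound sqrt M for \<pi>(c),
  since ||\<pi>(c) x||^2 = <x, \<pi>(c* c) x>.\<close>
lemma square_root_bound:
  assumes c: "c \<in> B" and M: "0 \<le> M" and bd: "\<And>x. norm (\<pi> (cstar c * c) x) \<le> M * norm x"
  shows "norm (\<pi> c x) \<le> sqrt M * norm x"
proof -
  have "(norm (\<pi> c x))\<^sup>2 = Re (cinner (\<pi> c x) (\<pi> c x))" by (simp add: cinner_self)
  also have "\<dots> = Re (cinner x (\<pi> (cstar c * c) x))"
    using pi_adj[OF c] pi_mult[OF B_cstar[OF c] c] by simp
  also have "\<dots> \<le> norm x * norm (\<pi> (cstar c * c) x)" by (rule Re_cinner_le)
  also have "\<dots> \<le> norm x * (M * norm x)" by (rule mult_left_mono[OF bd]) simp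
  finally have "(norm (\<pi> c x))\<^sup>2 \<le> M * (norm x)\<^sup>2" by (simp add: power2_eq_square algebra_simps)
  then have "norm (\<pi> c x) \<le> sqrt (M * (norm x)\<^sup>2)" by (rule real_le_rsqrt)
  then show ?thesis by (simp add: real_sqrt_mult)
qed

text \<open>Iterating the square-root bound along the iterated squares of b.\<close>
lemma root_bound_from_iterated_square:
  assumes b: "b \<in> B" and M: "0 \<le> M"
    and bd: "\<And>x. norm (\<pi> (iterated_square N b) x) \<le> M * norm x"
  shows "norm (\<pi> b x) \<le> root (2 ^ (N + 1)) M * norm x"
  using M bd
proof (induction N arbitrary: M x)
  case 0
  then show ?case using square_root_bound[OF b, of M x] by (simp add: iterated_square_0 sqrt_def)
next
  case (Suc N)
  let ?y = "iterated_square N b"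
  have y: "?y \<in> B" using iterated_square_closed[of B b N] B_cstar B_mult b by blast
  have "norm (\<pi> ?y x) \<le> sqrt M * norm x" for x
    using square_root_bound[OF y Suc.prems(1)] Suc.prems(2)
    by (simp add: iterated_square_Suc iterated_square_selfadjoint)
  then have "norm (\<pi> b x) \<le> root (2 ^ (N + 1)) (sqrt M) * norm x"
    using Suc.IH[of "sqrt M"] Suc.prems(1) by simp
  also have "root (2 ^ (N + 1)) (sqrt M) = root (2 ^ (Suc N + 1)) M"
    by (simp add: sqrt_def real_root_mult_exp[symmetric] mult.commute)
  finally show ?case .
qed

text \<open>The power trick: a representation that is bounded, with any constant, on a subset of B
  closed under products and involution is contractive there.\<close>
lemma contractive_if_bounded:
  assumes D: "D \<subseteq> B" "\<forall>y\<in>D. cstar y \<in> D" "\<forall>y\<in>D. \<forall>z\<in>D. y * z \<in> D"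
    and bound: "\<forall>y\<in>D. \<forall>x. norm (\<pi> y x) \<le> C * norm y * norm x"
    and b: "b \<in> D"
  shows "norm (\<pi> b x) \<le> norm b * norm x"
proof -
  define C1 where "C1 = \<bar>C\<bar> + 1"
  have C1: "C1 > 0" by (simp add: C1_def)
  have bd: "norm (\<pi> b x) \<le> root (2 ^ (N + 1)) C1 * norm b * norm x" for N
  proof -
    have "norm (\<pi> (iterated_square N b) x) \<le> (C1 * norm b ^ 2 ^ (N + 1)) * norm x" for x
    proof -
      have "iterated_square N b \<in> D" using iterated_square_closed D b by blast
      then have "norm (\<pi> (iterated_square N b) x) \<le> C * norm (iterated_square N b) * norm x"
        using bound by blast
      also have "\<dots> \<le> C1 * norm b ^ 2 ^ (N + 1) * norm x"
        using iterated_square_norm[of N b] unfolding C1_def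
        by (intro mult_right_mono mult_mono) auto
      finally show ?thesis by simp
    qed
    then have "norm (\<pi> b x) \<le> root (2 ^ (N + 1)) (C1 * norm b ^ 2 ^ (N + 1)) * norm x"
      using root_bound_from_iterated_square b D(1) C1 by auto
    also have "root (2 ^ (N + 1)) (C1 * norm b ^ 2 ^ (N + 1)) = root (2 ^ (N + 1)) C1 * norm b"
      by (simp add: real_root_mult real_root_power_cancel del: power_Suc)
    finally show ?thesis .
  qed
  have "(\<lambda>N. root (2 ^ (N + 1)) C1 * norm b * norm x) \<longlonglongrightarrow> 1 * norm b * norm x"
  proof (intro tendsto_mult_right)
    have "strict_mono (\<lambda>N::nat. 2 ^ (N + 1) :: nat)" by (rule strict_monoI) simp
    then show "(\<lambda>N. root (2 ^ (N + 1)) C1) \<longlonglongrightarrow> 1"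
      using LIMSEQ_subseq_LIMSEQ[OF LIMSEQ_root_const[OF C1]] by (simp add: o_def)
  qed
  then show ?thesis using LIMSEQ_le_const[of _ _ "norm (\<pi> b x)"] bd by auto
qed

lemma contractive_imp_continuous:
  assumes contr: "\<And>b x. b \<in> B \<Longrightarrow> norm (\<pi> b x) \<le> norm b * norm x"
  shows "rep_continuous B \<pi>"
  unfolding rep_continuous_def
proof (intro ballI allI impI exI conjI)
  fix b0 b :: 'a and e :: real and x
  assume b0: "b0 \<in> B" and e: "e > 0" and b: "b \<in> B" and lt: "norm (b - b0) < e"
  have "norm (\<pi> b x - \<pi> b0 x) = norm (\<pi> (b - b0) x)" using pi_diff[OF b b0] by simp
  also have "\<dots> \<le> norm (b - b0) * norm x" using contr B_diff[OF b b0] by blast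
  also have "\<dots> \<le> e * norm x" using lt by (simp add: mult_right_mono)
  finally show "norm (\<pi> b x - \<pi> b0 x) \<le> e * norm x" .
qed

text \<open>Conversely, by homogeneity a representation continuous at 0 is bounded.\<close>
lemma continuous_imp_bounded:
  assumes "rep_continuous B \<pi>"
  shows "\<exists>K\<ge>0. \<forall>c\<in>B. \<forall>x. norm (\<pi> c x) \<le> K * norm c * norm x"
proof -
  obtain d where d: "d > 0" and dd: "\<And>c x. c \<in> B \<Longrightarrow> norm c < d \<Longrightarrow> norm (\<pi> c x) \<le> norm x"
    using assms B_zero unfolding rep_continuous_def
    by (metis diff_zero pi_zero mult_1 zero_less_one)
  have "norm (\<pi> c x) \<le> (2 / d) * norm c * norm x" if c: "c \<in> B" for c x
  proof (cases "c = 0")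
    case True then show ?thesis by (simp add: pi_zero)
  next
    case False
    define r where "r = d / (2 * norm c)"
    have r: "r > 0" using d False by (simp add: r_def)
    have "norm (scaleC (complex_of_real r) c) = r * norm c"
      using r by (simp add: norm_scaleC)
    also have "\<dots> = d / 2" using False by (simp add: r_def)
    finally have "norm (scaleC (complex_of_real r) c) = d / 2" .
    then have "norm (\<pi> (scaleC (complex_of_real r) c) x) \<le> norm x"
      using dd[OF B_scaleC[OF c]] d by simp
    then have "r * norm (\<pi> c x) \<le> norm x" using r
      by (simp add: pi_scaleC[OF c] norm_scaleC)
    then show ?thesis using False d r by (simp add: r_def field_simps)
  qed
  then show ?thesis using d by (intro exI[of _ "2/d"]) auto
qed

end

section \<open>Representations bounded on the diagonal corners\<close>

context orthogonal_projections
begin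

text \<open>A bound K on the diagonal corner of l gives the bound sqrt K on every corner p_k A p_l,
  because c* c lies in the diagonal corner whenever c lies in p_k A p_l.\<close>
lemma corner_rep_bound:
  fixes \<pi> :: "'a \<Rightarrow> 'h::chilbert_space \<Rightarrow> 'h"
  assumes sub: "star_subalgebra B" and rep: "representation B \<pi>"
    and kl: "k \<in> I" "l \<in> I" and K: "0 \<le> K"
    and diag: "\<forall>c\<in>B \<inter> corner (p l) (p l). \<forall>x. norm (\<pi> c x) \<le> K * norm c * norm x"
    and c: "c \<in> B" "c \<in> corner (p k) (p l)"
  shows "norm (\<pi> c x) \<le> sqrt K * norm c * norm x"
proof -
  have "cstar c * c \<in> B \<inter> corner (p l) (p l)"
    using corner_cstar_mult[OF kl c(2)] B_mult[OF sub rep B_cstar[OF sub rep c(1)] c(1)] by blast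
  then have "norm (\<pi> (cstar c * c) x) \<le> K * norm (cstar c * c) * norm x" for x
    using diag by blast
  then have "norm (\<pi> (cstar c * c) x) \<le> (K * (norm c)\<^sup>2) * norm x" for x
    by (simp add: cstar_identity power2_eq_square)
  then have "norm (\<pi> c x) \<le> sqrt (K * (norm c)\<^sup>2) * norm x"
    using square_root_bound[OF sub rep c(1)] K by simp
  then show ?thesis using K by (simp add: real_sqrt_mult)
qed

text \<open>On the elements of B supported in a fixed finite index set S the representation is
  bounded by a constant depending only on S: such an element is the sum of its components
  p_k y p_l with k, l \<in> S, each of norm at most ||y||.\<close>
lemma supported_rep_bound:
  fixes \<pi> :: "'a \<Rightarrow> 'h::chilbert_space \<Rightarrow> 'h"
  assumes sub: "star_subalgebra B" and rep: "representation B \<pi>"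
    and decomp: "\<forall>b\<in>B. \<exists>F c. finite F \<and> F \<subseteq> I \<times> I
                     \<and> (\<forall>(i, j)\<in>F. c (i, j) \<in> B \<inter> corner (p i) (p j))
                     \<and> b = (\<Sum>ij\<in>F. c ij)"
    and K: "\<forall>l\<in>I. 0 \<le> K l"
    and diag: "\<forall>l\<in>I. \<forall>c\<in>B \<inter> corner (p l) (p l). \<forall>x. norm (\<pi> c x) \<le> K l * norm c * norm x"
    and S: "finite S" "S \<subseteq> I" and y: "y \<in> B" "supported S y"
  shows "norm (\<pi> y x) \<le> (\<Sum>kl\<in>S \<times> S. sqrt (K (snd kl))) * norm y * norm x"
proof -
  obtain G d where G: "finite G" "G \<subseteq> I \<times> I"
    and d: "\<forall>(i, j)\<in>G. d (i, j) \<in> B \<inter> corner (p i) (p j)" and yG: "y = (\<Sum>ij\<in>G. d ij)"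
    using decomp y(1) by meson
  have d_corner: "\<forall>(i, j)\<in>G. d (i, j) \<in> corner (p i) (p j)" using d by auto
  have d_B: "d ij \<in> B" if "ij \<in> G" for ij using d that by auto
  have y_restrict: "y = (\<Sum>ij\<in>G \<inter> S \<times> S. d ij)"
    using supported_sum_restrict[OF G d_corner] y(2) yG by simp
  have term_bound: "norm (\<pi> (d ij) x) \<le> sqrt (K (snd ij)) * norm y * norm x" if ij: "ij \<in> G" for ij
  proof -
    obtain k l where kl: "ij = (k, l)" by (cases ij)
    have klI: "k \<in> I" "l \<in> I" using ij kl G by auto
    have dd: "d (k, l) \<in> B" "d (k, l) \<in> corner (p k) (p l)" using d ij kl by auto
    have "d (k, l) = L k (R l y)" using sum_component[OF G d_corner] ij kl yG by simp
    then have "norm (d (k, l)) \<le> norm y"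
      using norm_L[of "p k" "R l y"] norm_R[of "p l" y] proj klI by fastforce
    then have "sqrt (K l) * norm (d (k, l)) * norm x \<le> sqrt (K l) * norm y * norm x"
      using K klI by (intro mult_right_mono mult_left_mono) auto
    then show ?thesis
      using corner_rep_bound[OF sub rep klI, of "K l" _ x] K diag klI dd kl by fastforce
  qed
  have "norm (\<pi> y x) = norm (\<Sum>ij\<in>G \<inter> S \<times> S. \<pi> (d ij) x)"
    using pi_sum[OF sub rep, of "G \<inter> S \<times> S" d x] d_B y_restrict by simp
  also have "\<dots> \<le> (\<Sum>ij\<in>G \<inter> S \<times> S. norm (\<pi> (d ij) x))" by (rule norm_sum)
  also have "\<dots> \<le> (\<Sum>ij\<in>G \<inter> S \<times> S. sqrt (K (snd ij)) * norm y * norm x)"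
    using term_bound by (intro sum_mono) blast
  also have "\<dots> \<le> (\<Sum>ij\<in>S \<times> S. sqrt (K (snd ij)) * norm y * norm x)"
    using S K by (intro sum_mono2) auto
  also have "\<dots> = (\<Sum>kl\<in>S \<times> S. sqrt (K (snd kl))) * norm y * norm x"
    by (simp add: sum_distrib_right)
  finally show ?thesis .
qed

end

theorem mainTheorem5:
  fixes I :: "'i set"
    and p :: "'i \<Rightarrow> 'a::cstar_algebra multiplier"
    and B :: "'a set"
  assumes proj: "\<forall>i\<in>I. mult_projection (p i)"
    and orth: "\<forall>i\<in>I. \<forall>j\<in>I. i \<noteq> j \<longrightarrow> mult_mult (p i) (p j) = mult_zero"
    and subalg: "star_subalgebra B"
    and decomp: "\<forall>b\<in>B. \<exists>F c. finite F \<and> F \<subseteq> I \<times> I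
                     \<and> (\<forall>(i, j)\<in>F. c (i, j) \<in> B \<inter> corner (p i) (p j))
                     \<and> b = (\<Sum>ij\<in>F. c ij)"
    and core: "\<forall>i\<in>I. core_subalgebra TYPE('h::chilbert_space) (B \<inter> corner (p i) (p i))"
  shows "core_subalgebra TYPE('h) B"
  unfolding core_subalgebra_def
proof (intro conjI allI impI subalg)
  interpret orthogonal_projections I p using proj orth by unfold_locales
  fix \<pi> :: "'a \<Rightarrow> 'h \<Rightarrow> 'h"
  assume rep: "representation B \<pi>"
  have "\<exists>K\<ge>0. \<forall>c\<in>B \<inter> corner (p l) (p l). \<forall>x. norm (\<pi> c x) \<le> K * norm c * norm x"
    if "l \<in> I" for l
    using continuous_imp_bounded representation_mono[OF _ rep] core that
    unfolding core_subalgebra_def by blast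
  then obtain K where K: "\<forall>l\<in>I. 0 \<le> K l"
    and diag: "\<forall>l\<in>I. \<forall>c\<in>B \<inter> corner (p l) (p l). \<forall>x. norm (\<pi> c x) \<le> K l * norm c * norm x"
    by metis
  have "norm (\<pi> b x) \<le> norm b * norm x" if b: "b \<in> B" for b x
  proof -
    obtain F c where F: "finite F" "F \<subseteq> I \<times> I"
      and c: "\<forall>(i, j)\<in>F. c (i, j) \<in> B \<inter> corner (p i) (p j)" and bF: "b = (\<Sum>ij\<in>F. c ij)"
      using decomp b by meson
    define S where "S = fst ` F \<union> snd ` F"
    have S: "finite S" "S \<subseteq> I" using F by (auto simp: S_def)
    have "supported S b" unfolding S_def bF using sum_supported[OF F] c by fast
    then show ?thesis
      using contractive_if_bounded[OF subalg rep, of "{y \<in> B. supported S y}"]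
        supported_rep_bound[OF subalg rep decomp K diag S] b
        B_cstar[OF subalg rep] B_mult[OF subalg rep] supported_cstar supported_mult
      by blast
  qed
  then show "rep_continuous B \<pi>" by (rule contractive_imp_continuous[OF subalg rep])
qed

end
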